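(* Let $N\geq 1$ be an integer and let $k_N=\dfrac{1}{2^{N+4}}$. Let $(X,Y;E)$ be a finite bipartite graph (so $X,Y$ are finite disjoint sets and $E\subseteq X\times Y$) which has VC-minimal complexity $<N$. Then there exist $X'\subseteq X$ and $Y'\subseteq Y$ with $|X'|\geq k_N|X|$ and $|Y'|\geq k_N|Y|$ such that either $X'\times Y'\subseteq E$ or $(X'\times Y')\cap E=\emptyset$.
   Context: For $a\in X$ and $S\subseteq Y$ write $E(a,S)=\{b\in S:(a,b)\in E\}$. A family $\Psi$ of subsets of a set $U$ is a directed family if for any $B,B'\in\Psi$ one has $B\subseteq B'$ or $B'\subseteq B$ or $B\cap B'=\emptyset$; members of $\Psi$ are called $\Psi$-balls. A $\Psi$-Swiss cheese is a set of the form $B\setminus(B_1\cup\dots\cup B_n)$ with $B,B_1,\dots,B_n$ $\Psi$-balls ($n\ge 0$); $B$ is its outer ball and the $B_i$ are its holes. The bipartite graph $(X,Y;E)$ has VC-minimal complexity $<N$ if there is a directed family $\Psi$ of subsets of $Y$ such that for every $a\in X$, $E(a,Y)$ is a finite disjoint union of $\Psi$-Swiss cheeses $E(a,Y)=\dot\bigcup_{k=1}^{s}\big(B_{k1}\setminus(B_{k2}\cup\dots\cup B_{kd(k)})\big)$ in which the total number of outer balls plus holes satisfies $d(1)+\dots+d(s)<N$ (an empty union, $s=0$, is allowed). *)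

theory Defs
  imports Complex_Main
begin

definition nbhd :: "('a \<times> 'b) set \<Rightarrow> 'a \<Rightarrow> 'b set \<Rightarrow> 'b set" where
  "nbhd E a S = {b \<in> S. (a, b) \<in> E}"

definition directed_family :: "'b set \<Rightarrow> 'b set set \<Rightarrow> bool" where
  "directed_family U \<Psi> \<longleftrightarrow> (\<forall>B\<in>\<Psi>. B \<subseteq> U) \<and>
     (\<forall>B\<in>\<Psi>. \<forall>B'\<in>\<Psi>. B \<subseteq> B' \<or> B' \<subseteq> B \<or> B \<inter> B' = {})"

text \<open>A Swiss cheese given as a nonempty list of balls: the head is the outer ball,
  the tail lists the holes.\<close>
definition cheese :: "'b set list \<Rightarrow> 'b set" where
  "cheese c = hd c - \<Union>(set (tl c))"

text \<open>VC-minimal complexity < N: E(a,Y) is a disjoint union of s Psi-Swiss cheeses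
  (cheese k given by the list cs!k = [B_k1, ..., B_k d(k)]) with d(1)+...+d(s) < N.\<close>
definition vc_minimal_complexity_lt ::
  "'a set \<Rightarrow> 'b set \<Rightarrow> ('a \<times> 'b) set \<Rightarrow> nat \<Rightarrow> bool" where
  "vc_minimal_complexity_lt X Y E N \<longleftrightarrow>
    (\<exists>\<Psi>. directed_family Y \<Psi> \<and>
      (\<forall>a\<in>X. \<exists>cs :: 'b set list list.
          (\<forall>c\<in>set cs. c \<noteq> [] \<and> set c \<subseteq> \<Psi>) \<and>
          (\<forall>i<length cs. \<forall>j<length cs. i \<noteq> j \<longrightarrow> cheese (cs!i) \<inter> cheese (cs!j) = {}) \<and>
          nbhd E a Y = (\<Union>i<length cs. cheese (cs!i)) \<and>
          (\<Sum>i<length cs. length (cs!i)) < N))"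

end

theory Submission
  imports Defs "HOL-Library.FuncSet"
begin

text \<open>A laminar family of balls admits a linear order of the finite set \<open>Y\<close> in which every
  ball is an interval: insert the points one at a time, each directly after the largest point
  of the smallest ball around it. Cut \<open>Y\<close> in this order into \<open>2N\<close> consecutive blocks of equal
  size. An interval splits at most two blocks, so the fewer than \<open>N\<close> balls describing \<open>E(a,Y)\<close>
  leave some block unsplit, and \<open>E(a,-)\<close> is constant on it. By pigeonhole one block serves a
  \<open>1/(2N)\<close> fraction of \<open>X\<close>, and keeping the larger half according to the value of \<open>E(a,-)\<close>
  on that block yields a homogeneous pair of density \<open>1/(4N) \<ge> 2^-(N+4)\<close> on both sides.\<close>

definition laminar :: "'b set set \<Rightarrow> bool" where
  "laminar \<Psi> \<longleftrightarrow> (\<forall>B\<in>\<Psi>. \<forall>B'\<in>\<Psi>. B \<subseteq> B' \<or> B' \<subseteq> B \<or> B \<inter> B' = {})"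

lemma directed_family_laminar: "directed_family U \<Psi> \<Longrightarrow> laminar \<Psi>"
  unfolding directed_family_def laminar_def by blast

lemma laminar_insert_UNIV: "laminar \<Psi> \<Longrightarrow> laminar (insert UNIV \<Psi>)"
  unfolding laminar_def by blast

definition interval_wrt :: "('b \<Rightarrow> 'c::linorder) \<Rightarrow> 'b set \<Rightarrow> 'b set \<Rightarrow> bool" where
  "interval_wrt f Y B \<longleftrightarrow>
    (\<forall>x\<in>B \<inter> Y. \<forall>z\<in>B \<inter> Y. \<forall>y\<in>Y. f x \<le> f y \<longrightarrow> f y \<le> f z \<longrightarrow> y \<in> B)"

text \<open>The anchor \<open>l\<close> is a point of \<open>Y\<close> directly after which \<open>y0\<close> can be inserted without
  breaking any ball into two intervals.\<close>

lemma laminar_anchor: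
  fixes f :: "'b \<Rightarrow> 'c::linorder"
  assumes "laminar \<Psi>" and "finite Y" and "Y \<noteq> {}"
  obtains l where "l \<in> Y"
    and "\<And>B. B \<in> \<Psi> \<Longrightarrow> y0 \<in> B \<Longrightarrow> B \<inter> Y \<noteq> {} \<Longrightarrow> l \<in> B"
    and "\<And>B z. B \<in> \<Psi> \<Longrightarrow> y0 \<notin> B \<Longrightarrow> l \<in> B \<Longrightarrow> z \<in> B \<inter> Y \<Longrightarrow> f z \<le> f l"
proof -
  \<comment> \<open>\<open>UNIV\<close> is added as a ball of last resort, so that a smallest ball around \<open>y0\<close> meeting \<open>Y\<close> exists\<close>
  let ?\<Psi> = "insert UNIV \<Psi>"
  have "\<exists>C. (C \<in> ?\<Psi> \<and> y0 \<in> C \<and> C \<inter> Y \<noteq> {}) \<and>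
      (\<forall>B. B \<in> ?\<Psi> \<and> y0 \<in> B \<and> B \<inter> Y \<noteq> {} \<longrightarrow> card (C \<inter> Y) \<le> card (B \<inter> Y))"
    by (rule ex_has_least_nat[of _ UNIV]) (use assms(3) in auto)
  then obtain C where C: "C \<in> ?\<Psi>" "y0 \<in> C" "C \<inter> Y \<noteq> {}"
    and C_least: "\<And>B. B \<in> ?\<Psi> \<Longrightarrow> y0 \<in> B \<Longrightarrow> B \<inter> Y \<noteq> {} \<Longrightarrow> card (C \<inter> Y) \<le> card (B \<inter> Y)"
    by blast
  have fin: "finite (f ` (C \<inter> Y))" using assms(2) by simp
  obtain l where l: "l \<in> C \<inter> Y" "f l = Max (f ` (C \<inter> Y))"
    using Max_in[OF fin] C(3) by force
  have l_max: "f z \<le> f l" if "z \<in> C \<inter> Y" for z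
    using l(2) fin that by simp
  have nested: "B \<subseteq> C \<or> C \<subseteq> B \<or> B \<inter> C = {}" if "B \<in> \<Psi>" for B
    using laminar_insert_UNIV[OF assms(1)] C(1) that unfolding laminar_def by blast
  show thesis
  proof
    show "l \<in> Y" using l(1) by blast
  next
    fix B assume B: "B \<in> \<Psi>" "y0 \<in> B" "B \<inter> Y \<noteq> {}"
    show "l \<in> B"
    proof (cases "B \<subseteq> C")
      case True
      then have "B \<inter> Y \<subseteq> C \<inter> Y" by blast
      moreover have "card (C \<inter> Y) \<le> card (B \<inter> Y)" using C_least B by blast
      ultimately have "B \<inter> Y = C \<inter> Y" using assms(2) by (simp add: card_seteq)
      then show ?thesis using l(1) by blast
    next
      case False
      then show ?thesis using nested[OF B(1)] B(2) C(2) l(1) by blast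
    qed
  next
    fix B z assume B: "B \<in> \<Psi>" "y0 \<notin> B" "l \<in> B" and z: "z \<in> B \<inter> Y"
    have "B \<subseteq> C" using nested[OF B(1)] B C(2) l(1) by blast
    then show "f z \<le> f l" using l_max z by blast
  qed
qed

lemma interval_order_insert:
  fixes f :: "'b \<Rightarrow> int"
  assumes "laminar \<Psi>" and "finite Y" and "y0 \<notin> Y" and "inj_on f Y"
    and "\<forall>B\<in>\<Psi>. interval_wrt f Y B"
  obtains g :: "'b \<Rightarrow> int"
  where "inj_on g (insert y0 Y)" and "\<forall>B\<in>\<Psi>. interval_wrt g (insert y0 Y) B"
proof (cases "Y = {}")
  case True
  then show thesis by (intro that[of "\<lambda>_. 0"]) (auto simp: interval_wrt_def)
next
  case False
  obtain l where l: "l \<in> Y"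
    and up: "\<And>B. B \<in> \<Psi> \<Longrightarrow> y0 \<in> B \<Longrightarrow> B \<inter> Y \<noteq> {} \<Longrightarrow> l \<in> B"
    and down: "\<And>B z. B \<in> \<Psi> \<Longrightarrow> y0 \<notin> B \<Longrightarrow> l \<in> B \<Longrightarrow> z \<in> B \<inter> Y \<Longrightarrow> f z \<le> f l"
    using laminar_anchor[OF assms(1,2) False] by blast
  define g where "g y = (if y = y0 then 2 * f l + 1 else 2 * f y)" for y
  have g_Y: "g u \<le> g v \<longleftrightarrow> f u \<le> f v" if "u \<noteq> y0" "v \<noteq> y0" for u v
    using that by (simp add: g_def)
  have g_below: "g u \<le> g y0 \<longleftrightarrow> f u \<le> f l" if "u \<noteq> y0" for u
    using that by (simp add: g_def) presburger
  have g_above: "g y0 \<le> g v \<longleftrightarrow> f l < f v" if "v \<noteq> y0" for v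
    using that by (simp add: g_def) presburger
  have g_y0: "g v \<noteq> g y0" if "v \<noteq> y0" for v
    using that by (simp add: g_def) presburger
  have "inj_on g (insert y0 Y)"
  proof (rule inj_onI)
    fix u v assume "u \<in> insert y0 Y" "v \<in> insert y0 Y" "g u = g v"
    then show "u = v"
      using g_y0 \<open>inj_on f Y\<close> by (cases "u = y0"; cases "v = y0") (auto simp: g_def inj_on_def)
  qed
  moreover have "interval_wrt g (insert y0 Y) B" if B: "B \<in> \<Psi>" for B
    unfolding interval_wrt_def
  proof (intro ballI impI)
    fix x z y
    assume x: "x \<in> B \<inter> insert y0 Y" and z: "z \<in> B \<inter> insert y0 Y" and y: "y \<in> insert y0 Y"
      and xy: "g x \<le> g y" and yz: "g y \<le> g z"
    have conv: "y' \<in> B" if "x' \<in> B \<inter> Y" "z' \<in> B \<inter> Y" "y' \<in> Y" "f x' \<le> f y'" "f y' \<le> f z'"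
      for x' y' z'
      using assms(5) B that unfolding interval_wrt_def by blast
    show "y \<in> B"
    proof (cases "y = y0")
      case True
      show ?thesis
      proof (rule ccontr)
        assume "y \<notin> B"
        then have "x \<noteq> y0" "z \<noteq> y0" "y0 \<notin> B" using x z True by auto
        then have "f x \<le> f l" "f l < f z" using xy yz True g_below g_above by auto
        then have "l \<in> B" using conv[of x z l] x z l \<open>x \<noteq> y0\<close> \<open>z \<noteq> y0\<close> by auto
        then show False using down[OF B \<open>y0 \<notin> B\<close>, of z] z \<open>z \<noteq> y0\<close> \<open>f l < f z\<close> by auto
      qed
    next
      case False
      then have "y \<in> Y" using y by simp
      have "x \<noteq> y0 \<or> z \<noteq> y0"
        using xy yz g_y0[OF False] by force
      then have "B \<inter> Y \<noteq> {}" using x z by blast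
      then have l_B: "l \<in> B" if "y0 \<in> B" using up[OF B that] by blast
      \<comment> \<open>an endpoint equal to \<open>y0\<close> may be replaced by \<open>l\<close>\<close>
      obtain x' where "x' \<in> B \<inter> Y" "f x' \<le> f y"
        using x xy g_Y[OF _ False] g_above[OF False] l l_B
        by (cases "x = y0") (auto intro: less_imp_le)
      moreover obtain z' where "z' \<in> B \<inter> Y" "f y \<le> f z'"
        using z yz g_Y[OF False] g_below[OF False] l l_B by (cases "z = y0") auto
      ultimately show ?thesis using conv \<open>y \<in> Y\<close> by blast
    qed
  qed
  ultimately show thesis using that by blast
qed

lemma laminar_interval_order:
  assumes "laminar \<Psi>" and "finite Y"
  obtains f :: "'b \<Rightarrow> int" where "inj_on f Y" and "\<forall>B\<in>\<Psi>. interval_wrt f Y B"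
  using assms(2)
proof (induction Y arbitrary: thesis rule: finite_induct)
  case empty
  then show ?case by (auto simp: interval_wrt_def)
next
  case (insert y0 Y)
  obtain f :: "'b \<Rightarrow> int" where "inj_on f Y" and "\<forall>B\<in>\<Psi>. interval_wrt f Y B"
    using insert.IH by blast
  from interval_order_insert[OF assms(1) insert.hyps this] show ?case
    using insert.prems by blast
qed

lemma finite_inj_ranking:
  fixes f :: "'b \<Rightarrow> 'c::linorder"
  assumes "finite Y" and "inj_on f Y"
  obtains r :: "'b \<Rightarrow> nat"
  where "bij_betw r Y {..<card Y}" and "\<And>x y. x \<in> Y \<Longrightarrow> y \<in> Y \<Longrightarrow> r x \<le> r y \<longleftrightarrow> f x \<le> f y"
proof
  define r where "r y = card {z \<in> Y. f z < f y}" for y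
  have r_less: "r x < r y" if "x \<in> Y" "f x < f y" for x y
    unfolding r_def using assms(1) that by (intro psubset_card_mono) auto
  show r_le: "r x \<le> r y \<longleftrightarrow> f x \<le> f y" if "x \<in> Y" "y \<in> Y" for x y
    using r_less[of x y] r_less[of y x] that assms(2)
    by (cases "f x" "f y" rule: linorder_cases) (auto simp: inj_on_def)
  have "inj_on r Y"
  proof (rule inj_onI)
    fix x y assume "x \<in> Y" "y \<in> Y" "r x = r y"
    then have "f x = f y" using r_le[of x y] r_le[of y x] by simp
    then show "x = y" using assms(2) \<open>x \<in> Y\<close> \<open>y \<in> Y\<close> by (simp add: inj_on_def)
  qed
  moreover have "r ` Y \<subseteq> {..<card Y}"
    unfolding r_def using assms(1) by (auto intro: psubset_card_mono)
  ultimately show "bij_betw r Y {..<card Y}"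
    by (simp add: bij_betw_def card_image card_subset_eq)
qed

lemma laminar_interval_ranking:
  assumes "laminar \<Psi>" and "finite Y"
  obtains r :: "'b \<Rightarrow> nat"
  where "bij_betw r Y {..<card Y}" and "\<forall>B\<in>\<Psi>. interval_wrt r Y B"
proof -
  obtain f :: "'b \<Rightarrow> int" where "inj_on f Y" and f_intervals: "\<forall>B\<in>\<Psi>. interval_wrt f Y B"
    using laminar_interval_order[OF assms] .
  then obtain r where "bij_betw r Y {..<card Y}"
    and "\<And>x y. x \<in> Y \<Longrightarrow> y \<in> Y \<Longrightarrow> r x \<le> r y \<longleftrightarrow> f x \<le> f y"
    using finite_inj_ranking[OF assms(2)] by blast
  with f_intervals show thesis
    using that unfolding interval_wrt_def by (metis IntD2)
qed

definition block :: "('b \<Rightarrow> nat) \<Rightarrow> 'b set \<Rightarrow> nat \<Rightarrow> nat \<Rightarrow> 'b set" where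
  "block r Y s j = {y \<in> Y. r y div s = j}"

definition splits :: "'b set \<Rightarrow> 'b set \<Rightarrow> bool" where
  "splits B P \<longleftrightarrow> P \<inter> B \<noteq> {} \<and> \<not> P \<subseteq> B"

lemma card_block:
  assumes "bij_betw r Y {..<m}" and "0 < s" and "j * s + s \<le> m"
  shows "card (block r Y s j) = s"
proof -
  have div_eq_iff: "i div s = j \<longleftrightarrow> i \<in> {j * s..<j * s + s}" for i
  proof -
    have "i div s = j \<longleftrightarrow> j \<le> i div s \<and> i div s < Suc j" by auto
    also have "\<dots> \<longleftrightarrow> j * s \<le> i \<and> i < Suc j * s"
      using assms(2) by (simp add: less_eq_div_iff_mult_less_eq div_less_iff_less_mult)
    finally show ?thesis by (simp add: add.commute)
  qed
  have "r ` block r Y s j = r ` Y \<inter> {j * s..<j * s + s}"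
    unfolding block_def div_eq_iff by blast
  also have "\<dots> = {j * s..<j * s + s}"
    using assms(1,3) by (auto simp: bij_betw_def)
  finally have "card (r ` block r Y s j) = s" by simp
  moreover have "inj_on r (block r Y s j)"
    using bij_betw_imp_inj_on[OF assms(1)] unfolding block_def by (rule inj_on_subset) blast
  ultimately show ?thesis by (simp add: card_image)
qed

lemma interval_splits_at_most_two_blocks:
  assumes "finite Y" and "interval_wrt r Y B"
  shows "card {j. splits B (block r Y s j)} \<le> 2"
proof (cases "B \<inter> Y = {}")
  case True
  then have "{j. splits B (block r Y s j)} = {}"
    unfolding splits_def block_def by blast
  then show ?thesis by simp
next
  case False
  have fin: "finite (r ` (B \<inter> Y))" using assms(1) by simp
  obtain x where x: "x \<in> B \<inter> Y" "r x = Min (r ` (B \<inter> Y))"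
    using Min_in[OF fin] False by force
  obtain z where z: "z \<in> B \<inter> Y" "r z = Max (r ` (B \<inter> Y))"
    using Max_in[OF fin] False by force
  have "{j. splits B (block r Y s j)} \<subseteq> {r x div s, r z div s}"
  proof
    fix j assume "j \<in> {j. splits B (block r Y s j)}"
    then obtain y w where y: "y \<in> B \<inter> Y" "r y div s = j" and w: "w \<in> Y" "w \<notin> B" "r w div s = j"
      unfolding splits_def block_def by blast
    show "j \<in> {r x div s, r z div s}"
    proof (rule ccontr)
      assume j: "j \<notin> {r x div s, r z div s}"
      have "r x \<le> r y" "r y \<le> r z" using x z y fin by simp_all
      then have "r x div s \<le> j" "j \<le> r z div s" using y(2) div_le_mono by blast+
      then have "r x div s < r w div s" "r w div s < r z div s" using j w(3) by auto
      then have "r x \<le> r w" "r w \<le> r z"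
        by (meson div_le_mono leD nat_le_linear)+
      then have "w \<in> B" using assms(2) x z w unfolding interval_wrt_def by blast
      with w show False by simp
    qed
  qed
  then have "card {j. splits B (block r Y s j)} \<le> card {r x div s, r z div s}"
    by (rule card_mono[rotated]) simp
  also have "\<dots> \<le> 2" by (simp add: card_insert_if)
  finally show ?thesis .
qed

lemma exists_unsplit_block:
  assumes "finite Y" and "finite S" and "\<forall>B\<in>S. interval_wrt r Y B" and "2 * card S < K"
  obtains j where "j < K" and "\<forall>B\<in>S. \<not> splits B (block r Y s j)"
proof -
  let ?J = "\<Union>B\<in>S. {j. splits B (block r Y s j)}"
  have "{j. splits B (block r Y s j)} \<subseteq> (\<lambda>y. r y div s) ` Y" for B
    unfolding splits_def block_def by blast
  then have "finite ?J" using assms(1,2) by (blast intro: finite_subset)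
  have "card ?J \<le> (\<Sum>B\<in>S. card {j. splits B (block r Y s j)})"
    using assms(2) by (rule card_UN_le)
  also have "\<dots> \<le> (\<Sum>B\<in>S. 2)"
    using assms(1,3) by (intro sum_mono interval_splits_at_most_two_blocks) auto
  also have "\<dots> < card {..<K}" using assms(4) by simp
  finally have "\<not> {..<K} \<subseteq> ?J"
    using card_mono[OF \<open>finite ?J\<close>, of "{..<K}"] by auto
  then show thesis using that by blast
qed

definition homogeneous :: "('a \<times> 'b) set \<Rightarrow> 'a set \<Rightarrow> 'b set \<Rightarrow> bool" where
  "homogeneous E A B \<longleftrightarrow> A \<times> B \<subseteq> E \<or> (A \<times> B) \<inter> E = {}"

lemma homogeneous_half:
  assumes "finite A" and "\<And>a. a \<in> A \<Longrightarrow> (\<forall>b\<in>B. (a, b) \<in> E) \<or> (\<forall>b\<in>B. (a, b) \<notin> E)"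
  obtains A' where "A' \<subseteq> A" and "card A \<le> 2 * card A'" and "homogeneous E A' B"
proof -
  define A1 where "A1 = {a \<in> A. \<forall>b\<in>B. (a, b) \<in> E}"
  have "card A = card A1 + card (A - A1)"
    using assms(1) card_Int_Diff[of A A1] unfolding A1_def by (simp add: Int_absorb1)
  moreover have "homogeneous E A1 B" "homogeneous E (A - A1) B"
    using assms(2) unfolding homogeneous_def A1_def by auto
  moreover have "A1 \<subseteq> A" "A - A1 \<subseteq> A" unfolding A1_def by auto
  ultimately show thesis
    using that[of A1] that[of "A - A1"] by (cases "card (A - A1) \<le> card A1") simp_all
qed

lemma cheese_mem_cong:
  assumes "c \<noteq> []" and "\<forall>B\<in>set c. y \<in> B \<longleftrightarrow> y' \<in> B"
  shows "y \<in> cheese c \<longleftrightarrow> y' \<in> cheese c"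
  using assms by (cases c) (auto simp: cheese_def)

lemma cheese_union_mem_cong:
  assumes "\<forall>c\<in>set cs. c \<noteq> []" and "\<forall>B\<in>set (concat cs). y \<in> B \<longleftrightarrow> y' \<in> B"
  shows "y \<in> (\<Union>i<length cs. cheese (cs!i)) \<longleftrightarrow> y' \<in> (\<Union>i<length cs. cheese (cs!i))"
proof -
  have "y \<in> cheese (cs!i) \<longleftrightarrow> y' \<in> cheese (cs!i)" if "i < length cs" for i
  proof (rule cheese_mem_cong)
    show "cs!i \<noteq> []" using assms(1) that by simp
    show "\<forall>B\<in>set (cs!i). y \<in> B \<longleftrightarrow> y' \<in> B" using assms(2) that by auto
  qed
  then show ?thesis by blast
qed

lemma card_set_concat_le: "card (set (concat cs)) \<le> (\<Sum>i<length cs. length (cs!i))"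
proof -
  have "card (set (concat cs)) \<le> length (concat cs)" by (rule card_length)
  also have "\<dots> = (\<Sum>i<length cs. length (cs!i))"
    by (simp add: length_concat sum_list_sum_nth atLeast0LessThan)
  finally show ?thesis .
qed

lemma vc_minimal_complexity_ballsE:
  assumes "vc_minimal_complexity_lt X Y E N"
  obtains \<Psi> S where "laminar \<Psi>"
    and "\<And>a. a \<in> X \<Longrightarrow> finite (S a) \<and> S a \<subseteq> \<Psi> \<and> card (S a) < N"
    and "\<And>a y y'. a \<in> X \<Longrightarrow> y \<in> Y \<Longrightarrow> y' \<in> Y \<Longrightarrow> \<forall>B\<in>S a. y \<in> B \<longleftrightarrow> y' \<in> B \<Longrightarrow>
        (a, y) \<in> E \<longleftrightarrow> (a, y') \<in> E"
proof -
  obtain \<Psi> where "directed_family Y \<Psi>" and cheeses: "\<forall>a\<in>X. \<exists>cs :: 'b set list list.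
      (\<forall>c\<in>set cs. c \<noteq> [] \<and> set c \<subseteq> \<Psi>) \<and>
      (\<forall>i<length cs. \<forall>j<length cs. i \<noteq> j \<longrightarrow> cheese (cs!i) \<inter> cheese (cs!j) = {}) \<and>
      nbhd E a Y = (\<Union>i<length cs. cheese (cs!i)) \<and> (\<Sum>i<length cs. length (cs!i)) < N"
    using assms unfolding vc_minimal_complexity_lt_def by blast
  from bchoice[OF cheeses] obtain CS where CS: "\<forall>a\<in>X.
      (\<forall>c\<in>set (CS a). c \<noteq> [] \<and> set c \<subseteq> \<Psi>) \<and>
      (\<forall>i<length (CS a). \<forall>j<length (CS a). i \<noteq> j \<longrightarrow> cheese (CS a!i) \<inter> cheese (CS a!j) = {}) \<and>
      nbhd E a Y = (\<Union>i<length (CS a). cheese (CS a!i)) \<and> (\<Sum>i<length (CS a). length (CS a!i)) < N"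
    by blast
  show thesis
  proof (rule that[of \<Psi> "\<lambda>a. set (concat (CS a))"])
    show "laminar \<Psi>" using \<open>directed_family Y \<Psi>\<close> by (rule directed_family_laminar)
  next
    fix a assume "a \<in> X"
    then show "finite (set (concat (CS a))) \<and> set (concat (CS a)) \<subseteq> \<Psi> \<and> card (set (concat (CS a))) < N"
      using CS card_set_concat_le[of "CS a"] by fastforce
  next
    fix a y y' assume "a \<in> X" "y \<in> Y" "y' \<in> Y" and "\<forall>B\<in>set (concat (CS a)). y \<in> B \<longleftrightarrow> y' \<in> B"
    then have "y \<in> nbhd E a Y \<longleftrightarrow> y' \<in> nbhd E a Y"
      using CS cheese_union_mem_cong[of "CS a" y y'] by simp
    with \<open>y \<in> Y\<close> \<open>y' \<in> Y\<close> show "(a, y) \<in> E \<longleftrightarrow> (a, y') \<in> E" by (simp add: nbhd_def)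
  qed
qed

lemma homogeneous_block:
  fixes r :: "'b \<Rightarrow> nat"
  assumes "finite X" and "finite Y" and "bij_betw r Y {..<card Y}"
    and balls: "\<And>a. a \<in> X \<Longrightarrow> finite (S a) \<and> (\<forall>B\<in>S a. interval_wrt r Y B) \<and> 2 * card (S a) < K"
    and rows: "\<And>a y y'. a \<in> X \<Longrightarrow> y \<in> Y \<Longrightarrow> y' \<in> Y \<Longrightarrow> \<forall>B\<in>S a. y \<in> B \<longleftrightarrow> y' \<in> B \<Longrightarrow>
        (a, y) \<in> E \<longleftrightarrow> (a, y') \<in> E"
    and "0 < K" and "0 < s" and "K * s \<le> card Y"
  obtains X' Y' where "X' \<subseteq> X" and "Y' \<subseteq> Y" and "card X \<le> 2 * K * card X'"
    and "card Y' = s" and "homogeneous E X' Y'"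
proof -
  have "\<exists>j<K. \<forall>B\<in>S a. \<not> splits B (block r Y s j)" if "a \<in> X" for a
    using exists_unsplit_block[OF assms(2)] balls[OF that] by metis
  then obtain c where c: "\<And>a. a \<in> X \<Longrightarrow> c a < K \<and> (\<forall>B\<in>S a. \<not> splits B (block r Y s (c a)))"
    by metis
  obtain j where j: "j < K" and "card X \<le> card (c -` {j} \<inter> X) * card {..<K}"
    using pigeonhole_card[of c X "{..<K}"] c \<open>finite X\<close> \<open>0 < K\<close> by auto
  then have card_X: "card X \<le> K * card (c -` {j} \<inter> X)" by (simp add: mult.commute)
  let ?P = "block r Y s j"
  have "j * s + s \<le> card Y"
    using j \<open>K * s \<le> card Y\<close> by (metis Suc_leI add.commute mult_Suc mult_le_mono1 le_trans)
  then have card_P: "card ?P = s" using card_block[OF assms(3) \<open>0 < s\<close>] by blast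
  have "(\<forall>y\<in>?P. (a, y) \<in> E) \<or> (\<forall>y\<in>?P. (a, y) \<notin> E)" if "a \<in> c -` {j} \<inter> X" for a
  proof -
    have "(a, y) \<in> E \<longleftrightarrow> (a, y') \<in> E" if "y \<in> ?P" "y' \<in> ?P" for y y'
    proof (rule rows)
      show "\<forall>B\<in>S a. y \<in> B \<longleftrightarrow> y' \<in> B"
        using c \<open>a \<in> c -` {j} \<inter> X\<close> \<open>y \<in> ?P\<close> \<open>y' \<in> ?P\<close> unfolding splits_def by blast
    qed (use that \<open>a \<in> c -` {j} \<inter> X\<close> in \<open>auto simp: block_def\<close>)
    then show ?thesis by blast
  qed
  then obtain X' where "X' \<subseteq> c -` {j} \<inter> X" "card (c -` {j} \<inter> X) \<le> 2 * card X'"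
    "homogeneous E X' ?P"
    using homogeneous_half[of "c -` {j} \<inter> X" ?P E] \<open>finite X\<close> by blast
  moreover from this(2) card_X have "card X \<le> 2 * K * card X'"
    by (metis le_trans mult.assoc mult.left_commute mult_le_mono2)
  moreover have "?P \<subseteq> Y" by (auto simp: block_def)
  ultimately show thesis using that card_P by blast
qed

lemma homogeneous_pair_of_laminar_rows:
  assumes "N \<ge> 1" and "finite X" and "finite Y" and "laminar \<Psi>"
    and balls: "\<And>a. a \<in> X \<Longrightarrow> finite (S a) \<and> S a \<subseteq> \<Psi> \<and> card (S a) < N"
    and rows: "\<And>a y y'. a \<in> X \<Longrightarrow> y \<in> Y \<Longrightarrow> y' \<in> Y \<Longrightarrow> \<forall>B\<in>S a. y \<in> B \<longleftrightarrow> y' \<in> B \<Longrightarrow>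
        (a, y) \<in> E \<longleftrightarrow> (a, y') \<in> E"
  obtains X' Y' where "X' \<subseteq> X" and "Y' \<subseteq> Y" and "card X \<le> 4 * N * card X'"
    and "card Y \<le> 4 * N * card Y'" and "homogeneous E X' Y'"
proof -
  consider (empty) "Y = {}" | (small) y where "y \<in> Y" "card Y < 2 * N" | (large) "2 * N \<le> card Y"
    by (metis ex_in_conv not_le)
  then show thesis
  proof cases
    case empty
    have "card X \<le> 4 * N * card X" using \<open>N \<ge> 1\<close> by simp
    with empty show thesis using that[of X "{}"] by (simp add: homogeneous_def)
  next
    case small
    obtain X' where "X' \<subseteq> X" "card X \<le> 2 * card X'" "homogeneous E X' {y}"
      using homogeneous_half[OF \<open>finite X\<close>, of "{y}" E] by blast
    moreover have "card X \<le> 4 * N * card X'"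
      using \<open>card X \<le> 2 * card X'\<close> mult_le_mono1[of 2 "4 * N" "card X'"] \<open>N \<ge> 1\<close> by linarith
    moreover have "card Y \<le> 4 * N * card {y}" using small by simp
    ultimately show thesis using that[of X' "{y}"] small(1) by simp
  next
    case large
    obtain r where r: "bij_betw r Y {..<card Y}" and intervals: "\<forall>B\<in>\<Psi>. interval_wrt r Y B"
      using laminar_interval_ranking[OF \<open>laminar \<Psi>\<close> \<open>finite Y\<close>] .
    define s where "s = card Y div (2 * N)"
    have "0 < s" "2 * N * s \<le> card Y"
      using large \<open>N \<ge> 1\<close> by (simp_all add: s_def div_greater_zero_iff)
    have "card Y = 2 * N * s + card Y mod (2 * N)" by (simp add: s_def)
    also have "\<dots> \<le> 4 * N * s"
    proof -
      have "card Y mod (2 * N) < 2 * N" using \<open>N \<ge> 1\<close> by simp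
      also have "\<dots> \<le> 2 * N * s" using \<open>0 < s\<close> by simp
      finally show ?thesis by simp
    qed
    finally have card_Y: "card Y \<le> 4 * N * s" .
    have interval_balls:
      "finite (S a) \<and> (\<forall>B\<in>S a. interval_wrt r Y B) \<and> 2 * card (S a) < 2 * N" if "a \<in> X" for a
      using balls[OF that] intervals by auto
    have "0 < 2 * N" using \<open>N \<ge> 1\<close> by simp
    obtain X' Y' where "X' \<subseteq> X" "Y' \<subseteq> Y" "card X \<le> 2 * (2 * N) * card X'" "card Y' = s"
      "homogeneous E X' Y'"
      by (rule homogeneous_block[OF \<open>finite X\<close> \<open>finite Y\<close> r interval_balls rows
            \<open>0 < 2 * N\<close> \<open>0 < s\<close> \<open>2 * N * s \<le> card Y\<close>])
    then show thesis using that[of X' Y'] card_Y by simp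
  qed
qed

lemma scaled_card_le_of_le_4N:
  fixes n m N :: nat
  assumes "n \<le> 4 * N * m"
  shows "(1 / 2 ^ (N + 4)) * real n \<le> real m"
proof -
  have "(2::nat) ^ (N + 4) = 16 * 2 ^ N" by (simp add: power_add)
  then have "4 * N \<le> (2::nat) ^ (N + 4)" using less_exp[of N] by linarith
  with assms have "n \<le> 2 ^ (N + 4) * m" by (meson le_trans mult_le_mono1)
  then have "real n \<le> 2 ^ (N + 4) * real m"
    by (metis of_nat_le_iff of_nat_mult of_nat_numeral of_nat_power)
  then show ?thesis by (simp add: field_simps)
qed

theorem theorem3p1:
  fixes X :: "'a set" and Y :: "'b set" and E :: "('a \<times> 'b) set" and N :: nat
  assumes "N \<ge> 1"
    and "finite X" and "finite Y" and "E \<subseteq> X \<times> Y"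
    and "vc_minimal_complexity_lt X Y E N"
  shows "\<exists>X' Y'. X' \<subseteq> X \<and> Y' \<subseteq> Y \<and>
           real (card X') \<ge> (1 / 2 ^ (N + 4)) * real (card X) \<and>
           real (card Y') \<ge> (1 / 2 ^ (N + 4)) * real (card Y) \<and>
           (X' \<times> Y' \<subseteq> E \<or> (X' \<times> Y') \<inter> E = {})"
proof -
  obtain \<Psi> S where "laminar \<Psi>"
    and balls: "\<And>a. a \<in> X \<Longrightarrow> finite (S a) \<and> S a \<subseteq> \<Psi> \<and> card (S a) < N"
    and rows: "\<And>a y y'. a \<in> X \<Longrightarrow> y \<in> Y \<Longrightarrow> y' \<in> Y \<Longrightarrow> \<forall>B\<in>S a. y \<in> B \<longleftrightarrow> y' \<in> B \<Longrightarrow>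
        (a, y) \<in> E \<longleftrightarrow> (a, y') \<in> E"
    by (fact vc_minimal_complexity_ballsE[OF assms(5)])
  obtain X' Y' where "X' \<subseteq> X" "Y' \<subseteq> Y" and "card X \<le> 4 * N * card X'"
    and "card Y \<le> 4 * N * card Y'" and "homogeneous E X' Y'"
    by (rule homogeneous_pair_of_laminar_rows[OF assms(1-3) \<open>laminar \<Psi>\<close> balls rows])
  then show ?thesis
    unfolding homogeneous_def by (intro exI[of _ X'] exI[of _ Y'] conjI scaled_card_le_of_le_4N)
qed

end
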